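(* Any Single-Source DSO must take $\Omega(\min\{M^{1/2}n^{3/2},\, n^2\})$ bits of space on at least one undirected graph with $O(n)$ vertices and integer edge weights in the range $[1,M]$.
   Context: For an undirected edge-weighted graph $G$, a source $s$, a target $t$ and an edge $e$, $d(s,t,e)$ is the length of a shortest $s$-$t$ path in $G-e$ ($\infty$ if none). A Single-Source Distance Sensitivity Oracle (DSO) with source $s$ is a data structure (depending on $G$ and $s$) that answers every query $(t,e)$ by returning $d(s,t,e)$. *)

theory Defs
  imports Complex_Main "HOL-Library.Extended_Nat"
begin

definition valid_graph :: "nat \<Rightarrow> nat set set \<Rightarrow> (nat set \<Rightarrow> nat) \<Rightarrow> nat \<Rightarrow> bool" where
  "valid_graph N E w M \<longleftrightarrow>
     E \<subseteq> {{u, v} | u v. u < N \<and> v < N \<and> u \<noteq> v} \<and>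
     (\<forall>e\<in>E. 1 \<le> w e \<and> w e \<le> M) \<and>
     (\<forall>e. e \<notin> E \<longrightarrow> w e = 0)"

definition is_walk :: "nat set set \<Rightarrow> nat \<Rightarrow> nat \<Rightarrow> nat list \<Rightarrow> bool" where
  "is_walk E u v xs \<longleftrightarrow> xs \<noteq> [] \<and> hd xs = u \<and> last xs = v \<and>
     (\<forall>i < length xs - 1. {xs ! i, xs ! Suc i} \<in> E)"

definition walk_weight :: "(nat set \<Rightarrow> nat) \<Rightarrow> nat list \<Rightarrow> nat" where
  "walk_weight w xs = (\<Sum>i < length xs - 1. w {xs ! i, xs ! Suc i})"

text \<open>d(s,t,e): length of a shortest s-t path in G - e (infinity if none).\<close>
definition dist_avoid :: "nat set set \<Rightarrow> (nat set \<Rightarrow> nat) \<Rightarrow> nat \<Rightarrow> nat \<Rightarrow> nat set \<Rightarrow> enat" where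
  "dist_avoid E w s t e = (INF xs \<in> {xs. is_walk (E - {e}) s t xs}. enat (walk_weight w xs))"

text \<open>A single-source DSO for graphs with integer weights in [1,M]: an encoder mapping
  (number of vertices, graph, source) to a bit string, and a fixed query procedure
  that answers every query (t,e) correctly from the bit string alone.\<close>
definition is_SSDSO ::
  "nat \<Rightarrow> (nat \<Rightarrow> nat set set \<Rightarrow> (nat set \<Rightarrow> nat) \<Rightarrow> nat \<Rightarrow> bool list)
       \<Rightarrow> (bool list \<Rightarrow> nat \<Rightarrow> nat set \<Rightarrow> enat) \<Rightarrow> bool" where
  "is_SSDSO M enc dec \<longleftrightarrow>
     (\<forall>N E w s. valid_graph N E w M \<and> s < N \<longrightarrow>
        (\<forall>t < N. \<forall>e \<in> E. dec (enc N E w s) t e = dist_avoid E w s t e))"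

end

theory Submission
  imports Defs "HOL-Library.Discrete_Functions"
begin

(* Encode a set S of pairs (m, t) with m < k and t < n, where k = min n (floor_sqrt (n * M)),
  by a graph with source 0: a spine 0 - 1 - ... - k of unit edges; for each m < k a chain of
  total weight 2 (k - m) from spine vertex m to a hub, split into segments of weight at most M;
  and a unit edge from hub m to leaf t for every (m, t) in S. Once the spine edge {j, j + 1} is
  removed, leaf t is at distance 2 k - j + 1 from 0 if (j, t) is in S (along the spine to j,
  along chain j, then the leaf edge), and at distance at least 2 k - j + 2 otherwise, because
  every other reachable hub m < j already lies at distance 2 k - m. Hence a single-source DSO
  determines S, so one of the 2^(k n) graphs needs k n bits. The chains have at most
  k (2 k + M - 1) / M <= 3 n inner vertices, and k n >= min (sqrt M n^(3/2)) (n^2) / 2. *)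

section \<open>Walks, distances and potentials\<close>

lemma valid_graphI:
  assumes "\<And>e. e \<in> E \<Longrightarrow> \<exists>u v. e = {u, v} \<and> u < N \<and> v < N \<and> u \<noteq> v"
    and "\<And>e. e \<in> E \<Longrightarrow> 1 \<le> w e \<and> w e \<le> M"
    and "\<And>e. e \<notin> E \<Longrightarrow> w e = 0"
  shows "valid_graph N E w M"
  using assms unfolding valid_graph_def by (auto 0 3)

lemma is_walk_singleton: "is_walk E s s [s]"
  and walk_weight_singleton: "walk_weight w [s] = 0"
  by (auto simp: is_walk_def walk_weight_def)

lemma is_walk_snoc:
  assumes "is_walk E u v xs" "{v, y} \<in> E"
  shows "is_walk E u y (xs @ [y])"
  unfolding is_walk_def
proof (intro conjI allI impI)
  fix i assume i: "i < length (xs @ [y]) - 1"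
  show "{(xs @ [y]) ! i, (xs @ [y]) ! Suc i} \<in> E"
  proof (cases "i < length xs - 1")
    case True
    then show ?thesis using assms(1) by (auto simp: is_walk_def nth_append)
  next
    case False
    then have "i = length xs - 1" using i by simp
    then show ?thesis using assms by (auto simp: is_walk_def nth_append last_conv_nth)
  qed
qed (use assms(1) in \<open>auto simp: is_walk_def\<close>)

lemma walk_weight_snoc:
  assumes "xs \<noteq> []"
  shows "walk_weight w (xs @ [y]) = walk_weight w xs + w {last xs, y}"
proof -
  have "walk_weight w (xs @ [y]) = (\<Sum>i < Suc (length xs - 1). w {(xs @ [y]) ! i, (xs @ [y]) ! Suc i})"
    using assms by (simp add: walk_weight_def)
  also have "\<dots> = (\<Sum>i < length xs - 1. w {xs ! i, xs ! Suc i}) + w {last xs, y}"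
    using assms by (subst sum.lessThan_Suc) (auto simp: nth_append last_conv_nth intro!: sum.cong)
  also have "\<dots> = walk_weight w xs + w {last xs, y}"
    by (simp add: walk_weight_def)
  finally show ?thesis .
qed

definition has_walk :: "nat set set \<Rightarrow> (nat set \<Rightarrow> nat) \<Rightarrow> nat \<Rightarrow> nat \<Rightarrow> nat \<Rightarrow> bool" where
  "has_walk E w u v d \<longleftrightarrow> (\<exists>xs. is_walk E u v xs \<and> walk_weight w xs = d)"

lemma has_walk_refl: "has_walk E w u u 0"
  unfolding has_walk_def using is_walk_singleton walk_weight_singleton by blast

lemma has_walk_step:
  assumes "has_walk E w u v d" "{v, y} \<in> E"
  shows "has_walk E w u y (d + w {v, y})"
proof -
  obtain xs where xs: "is_walk E u v xs" "walk_weight w xs = d"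
    using assms(1) by (auto simp: has_walk_def)
  then have "xs \<noteq> []" "last xs = v" by (auto simp: is_walk_def)
  then show ?thesis
    using xs is_walk_snoc[OF xs(1) assms(2)] walk_weight_snoc unfolding has_walk_def by metis
qed

lemma dist_avoid_le_has_walk:
  "has_walk (E - {e}) w s t d \<Longrightarrow> dist_avoid E w s t e \<le> enat d"
  unfolding has_walk_def dist_avoid_def by (auto intro: INF_lower2)

definition feasible_potential :: "nat set set \<Rightarrow> (nat set \<Rightarrow> nat) \<Rightarrow> (nat \<Rightarrow> nat) \<Rightarrow> bool" where
  "feasible_potential E w \<phi> \<longleftrightarrow> (\<forall>e\<in>E. \<forall>a\<in>e. \<forall>b\<in>e. \<phi> b \<le> \<phi> a + w e)"

lemma feasible_potential_le_walk_weight: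
  assumes "feasible_potential E w \<phi>" "is_walk E s t xs"
  shows "\<phi> t \<le> \<phi> s + walk_weight w xs"
proof -
  have steps: "{xs ! i, xs ! Suc i} \<in> E" if "Suc i < length xs" for i
    using assms(2) that by (auto simp: is_walk_def)
  have "\<phi> (xs ! i) \<le> \<phi> (xs ! 0) + (\<Sum>l<i. w {xs ! l, xs ! Suc l})" if "i < length xs" for i
    using that
  proof (induction i)
    case (Suc i)
    then have "\<phi> (xs ! Suc i) \<le> \<phi> (xs ! i) + w {xs ! i, xs ! Suc i}"
      using assms(1) steps unfolding feasible_potential_def by blast
    with Suc show ?case by simp
  qed simp
  moreover have "xs \<noteq> []" "xs ! 0 = s" "xs ! (length xs - 1) = t"
    using assms(2) by (auto simp: is_walk_def hd_conv_nth last_conv_nth)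
  ultimately show ?thesis by (auto simp: walk_weight_def)
qed

lemma ball_doubleton_le:
  fixes \<phi> :: "'a \<Rightarrow> nat"
  shows "\<phi> r \<le> \<phi> p + c \<Longrightarrow> \<phi> p \<le> \<phi> r + c \<Longrightarrow> \<forall>a\<in>{p, r}. \<forall>b\<in>{p, r}. \<phi> b \<le> \<phi> a + c"
  by auto

lemma dist_avoid_ge_feasible_potential:
  assumes "feasible_potential (E - {e}) w \<phi>" "\<phi> s = 0"
  shows "enat (\<phi> t) \<le> dist_avoid E w s t e"
  unfolding dist_avoid_def
  using feasible_potential_le_walk_weight[OF assms(1)] assms(2) by (force intro!: INF_greatest)

section \<open>Counting encodings\<close>

lemma inj_on_bool_lists_long:
  fixes F :: "'a \<Rightarrow> bool list"
  assumes "inj_on F A" "2 ^ L \<le> card A"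
  shows "\<exists>a\<in>A. L \<le> length (F a)"
proof (rule ccontr)
  assume "\<not> ?thesis"
  then have "F ` A \<subseteq> {xs. length xs < L}" by auto
  moreover have "card {xs :: bool list. length xs < L} < 2 ^ L"
  proof (cases L)
    case (Suc L')
    then have "{xs :: bool list. length xs < L} = {xs. set xs \<subseteq> UNIV \<and> length xs \<le> L'}"
      by auto
    then show ?thesis
      using card_lists_length_le[of "UNIV :: bool set" L'] sum_power2[of L] Suc
      by (simp add: atLeast0LessThan lessThan_Suc_atMost)
  qed simp
  moreover have "finite {xs :: bool list. length xs < L}"
    using finite_lists_length_le[of "UNIV :: bool set" L] by (auto elim: finite_subset[rotated])
  ultimately have "card (F ` A) < 2 ^ L" by (meson card_mono le_less_trans)
  then show False using assms card_image by fastforce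
qed

lemma SSDSO_encoding_length:
  assumes dso: "is_SSDSO M enc dec" and source: "s < N"
    and valid: "\<And>S. S \<in> A \<Longrightarrow> valid_graph N (E S) (w S) M"
    and separated: "\<And>S S'. S \<in> A \<Longrightarrow> S' \<in> A \<Longrightarrow> S \<noteq> S' \<Longrightarrow>
       \<exists>t<N. \<exists>e \<in> E S \<inter> E S'. dist_avoid (E S) (w S) s t e \<noteq> dist_avoid (E S') (w S') s t e"
    and card: "2 ^ L \<le> card A"
  shows "\<exists>S\<in>A. L \<le> length (enc N (E S) (w S) s)"
proof (rule inj_on_bool_lists_long[OF inj_onI card])
  fix S S' assume S: "S \<in> A" "S' \<in> A" and enc: "enc N (E S) (w S) s = enc N (E S') (w S') s"
  show "S = S'"
  proof (rule ccontr)
    assume "S \<noteq> S'"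
    then obtain t e where "t < N" "e \<in> E S" "e \<in> E S'"
      and "dist_avoid (E S) (w S) s t e \<noteq> dist_avoid (E S') (w S') s t e"
      using separated S by blast
    then show False
      using dso valid[OF S(1)] valid[OF S(2)] source enc unfolding is_SSDSO_def by metis
  qed
qed

section \<open>The lower-bound graphs\<close>

(* Vertex numbering: the spine is 0, ..., k, leaf t is k + 1 + t, and the inner vertices of
  chain m fill a block of slot numbers from base + m * slot on; chain m l is the l-th vertex of
  chain m, whose 0-th vertex is spine vertex m and whose last one is hub m. *)
locale dso_gadget =
  fixes M k n :: nat
  assumes M_pos: "1 \<le> M"
begin

definition chain_length :: "nat \<Rightarrow> nat" where
  "chain_length m = 2 * (k - m)"

definition segments :: "nat \<Rightarrow> nat" where
  "segments m = (chain_length m + M - 1) div M"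

definition slot :: nat where
  "slot = segments 0"

definition leaf :: "nat \<Rightarrow> nat" where
  "leaf t = k + 1 + t"

definition base :: nat where
  "base = k + 1 + n"

definition num_vertices :: nat where
  "num_vertices = base + k * slot"

definition chain :: "nat \<Rightarrow> nat \<Rightarrow> nat" where
  "chain m l = (if l = 0 then m else base + m * slot + (l - 1))"

definition hub :: "nat \<Rightarrow> nat" where
  "hub m = chain m (segments m)"

definition is_leaf :: "nat \<Rightarrow> bool" where
  "is_leaf v \<longleftrightarrow> k < v \<and> v < base"

definition chain_index :: "nat \<Rightarrow> nat" where
  "chain_index v = (if v \<le> k then v else (v - base) div slot)"

definition height :: "nat \<Rightarrow> nat" where
  "height v = (if v \<le> k then v
     else chain_index v + min (chain_length (chain_index v)) (((v - base) mod slot + 1) * M))"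

definition spine_edges :: "nat set set" where
  "spine_edges = {{m, Suc m} | m. m < k}"

definition chain_edges :: "nat set set" where
  "chain_edges = {{chain m l, chain m (Suc l)} | m l. m < k \<and> l < segments m}"

definition leaf_edges :: "(nat \<times> nat) set \<Rightarrow> nat set set" where
  "leaf_edges S = {{hub m, leaf t} | m t. (m, t) \<in> S \<and> m < k \<and> t < n}"

definition edges :: "(nat \<times> nat) set \<Rightarrow> nat set set" where
  "edges S = spine_edges \<union> chain_edges \<union> leaf_edges S"

(* height is the distance from 0 in the graph without leaves: weighting each non-leaf edge by the
  height difference of its ends gives every chain segment weight M, except possibly the last. *)
definition weight :: "(nat \<times> nat) set \<Rightarrow> nat set \<Rightarrow> nat" where
  "weight S e = (if e \<notin> edges S then 0 else if \<exists>v\<in>e. is_leaf v then 1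
     else Max (height ` e) - Min (height ` e))"

lemma edges_cases [consumes 1, case_names spine chain leaf]:
  assumes "e \<in> edges S"
  obtains (spine) m where "e = {m, Suc m}" "m < k"
    | (chain) m l where "e = {chain m l, chain m (Suc l)}" "m < k" "l < segments m"
    | (leaf) m t where "e = {hub m, leaf t}" "(m, t) \<in> S" "m < k" "t < n"
  using assms unfolding edges_def spine_edges_def chain_edges_def leaf_edges_def by blast

lemma spine_edge_in_edges: "m < k \<Longrightarrow> {m, Suc m} \<in> edges S"
  unfolding edges_def spine_edges_def by blast

lemma chain_edge_in_edges: "m < k \<Longrightarrow> l < segments m \<Longrightarrow> {chain m l, chain m (Suc l)} \<in> edges S"
  unfolding edges_def chain_edges_def by blast

lemma leaf_edge_in_edges: "(m, t) \<in> S \<Longrightarrow> m < k \<Longrightarrow> t < n \<Longrightarrow> {hub m, leaf t} \<in> edges S"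
  unfolding edges_def leaf_edges_def by blast

lemma less_segments_iff: "l < segments m \<longleftrightarrow> l * M < chain_length m"
proof -
  have "l < segments m \<longleftrightarrow> Suc l * M \<le> chain_length m + M - 1"
    unfolding segments_def Suc_le_eq[symmetric] using M_pos
    by (intro less_eq_div_iff_mult_less_eq) simp
  also have "\<dots> \<longleftrightarrow> l * M < chain_length m"
    using M_pos by auto
  finally show ?thesis .
qed

lemma chain_length_le_segments: "chain_length m \<le> segments m * M"
  using less_segments_iff[of "segments m" m] by simp

lemma segments_le_slot: "segments m \<le> slot"
  unfolding slot_def segments_def chain_length_def by (rule div_le_mono) simp

lemma chain_vertex:
  assumes "m < k" "l \<le> segments m"
  shows "chain m l < num_vertices \<and> \<not> is_leaf (chain m l) \<and> chain_index (chain m l) = m \<and>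
    height (chain m l) = m + min (chain_length m) (l * M)"
proof (cases "l = 0")
  case False
  then obtain l' where l: "l = Suc l'"
    using not0_implies_Suc by blast
  define r where "r = m * slot + l'"
  have v: "chain m l = base + r"
    by (simp add: chain_def r_def l)
  have "l' < slot"
    using l assms segments_le_slot[of m] by linarith
  then have "r div slot = m" "Suc (r mod slot) = l"
    by (simp_all add: r_def l)
  moreover have "r < k * slot"
    using \<open>l' < slot\<close> assms(1) mult_le_mono1[of "Suc m" k slot] by (simp add: r_def)
  ultimately show ?thesis
    unfolding v by (simp add: num_vertices_def is_leaf_def chain_index_def height_def base_def)
next
  case True
  then show ?thesis
    using assms by (simp add: chain_def num_vertices_def base_def is_leaf_def chain_index_def
        height_def)
qed

lemmas chain_less_num_vertices = chain_vertex[THEN conjunct1]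
  and not_is_leaf_chain = chain_vertex[THEN conjunct2, THEN conjunct1]
  and chain_index_chain = chain_vertex[THEN conjunct2, THEN conjunct2, THEN conjunct1]
  and height_chain = chain_vertex[THEN conjunct2, THEN conjunct2, THEN conjunct2]

lemma height_hub: "m < k \<Longrightarrow> height (hub m) = 2 * k - m"
  using height_chain[of m "segments m"] chain_length_le_segments[of m]
  by (simp add: hub_def chain_length_def)

lemma height_chain_step:
  assumes "m < k" "l < segments m"
  shows "height (chain m l) < height (chain m (Suc l))"
    and "height (chain m (Suc l)) \<le> height (chain m l) + M"
  using assms less_segments_iff[of l m] M_pos height_chain[of m l] height_chain[of m "Suc l"]
  by auto

lemma weight_spine: "m < k \<Longrightarrow> weight S {m, Suc m} = 1"
  by (auto simp: weight_def edges_def spine_edges_def is_leaf_def height_def base_def)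

lemma weight_chain:
  assumes "m < k" "l < segments m"
  shows "weight S {chain m l, chain m (Suc l)} = height (chain m (Suc l)) - height (chain m l)"
proof -
  have "{chain m l, chain m (Suc l)} \<in> edges S"
    using chain_edge_in_edges[OF assms] .
  moreover have "height (chain m l) < height (chain m (Suc l))"
    using height_chain_step(1)[OF assms] .
  ultimately show ?thesis
    using not_is_leaf_chain[OF assms(1)] assms(2) by (auto simp: weight_def)
qed

lemma weight_leaf: "(m, t) \<in> S \<Longrightarrow> m < k \<Longrightarrow> t < n \<Longrightarrow> weight S {hub m, leaf t} = 1"
  by (auto simp: weight_def edges_def leaf_edges_def is_leaf_def leaf_def base_def)

lemma valid_graph_gadget: "valid_graph num_vertices (edges S) (weight S) M"
proof (rule valid_graphI)
  fix e assume "e \<in> edges S"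
  then show "\<exists>u v. e = {u, v} \<and> u < num_vertices \<and> v < num_vertices \<and> u \<noteq> v"
  proof (cases rule: edges_cases)
    case (spine m)
    then show ?thesis
      by (intro exI[of _ m] exI[of _ "Suc m"]) (simp add: num_vertices_def base_def)
  next
    case (chain m l)
    then have "height (chain m l) \<noteq> height (chain m (Suc l))"
      using height_chain_step(1)[of m l] by simp
    moreover have "chain m l < num_vertices" "chain m (Suc l) < num_vertices"
      using chain chain_less_num_vertices[of m] by simp_all
    ultimately show ?thesis
      using chain(1) by (intro exI[of _ "chain m l"] exI[of _ "chain m (Suc l)"]) auto
  next
    case (leaf m t)
    then have "hub m < num_vertices" "\<not> is_leaf (hub m)"
      using chain_less_num_vertices[of m "segments m"] not_is_leaf_chain[of m "segments m"]
      by (simp_all add: hub_def)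
    moreover have "leaf t < num_vertices" "is_leaf (leaf t)"
      using leaf by (auto simp: leaf_def num_vertices_def base_def is_leaf_def)
    ultimately show ?thesis
      using leaf(1) by (intro exI[of _ "hub m"] exI[of _ "leaf t"]) auto
  qed
next
  fix e assume "e \<in> edges S"
  then show "1 \<le> weight S e \<and> weight S e \<le> M"
  proof (cases rule: edges_cases)
    case (chain m l)
    then show ?thesis
      using weight_chain height_chain_step[of m l] by auto
  qed (use weight_spine weight_leaf M_pos in auto)
qed (simp add: weight_def)

lemma doubleton_neq_cut_edge:
  assumes "j < k" "k < v"
  shows "{u, v} \<noteq> {j, Suc j}"
  using assms by (auto simp: doubleton_eq_iff)

lemma has_walk_spine:
  assumes "m \<le> j" "j < k"
  shows "has_walk (edges S - {{j, Suc j}}) (weight S) 0 m m"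
  using assms(1)
proof (induction m)
  case (Suc m)
  then have m: "m < k" and walk: "has_walk (edges S - {{j, Suc j}}) (weight S) 0 m m"
    using assms(2) by simp_all
  have "{m, Suc m} \<in> edges S - {{j, Suc j}}"
    using Suc.prems spine_edge_in_edges[OF m] by (auto simp: doubleton_eq_iff)
  from has_walk_step[OF walk this] show ?case
    by (simp add: weight_spine[OF m])
qed (rule has_walk_refl)

lemma has_walk_chain:
  assumes "j < k" "l \<le> segments j"
  shows "has_walk (edges S - {{j, Suc j}}) (weight S) 0 (chain j l) (height (chain j l))"
  using assms(2)
proof (induction l)
  case 0
  then show ?case
    using has_walk_spine[of j j] assms(1) height_chain[of j 0] by (simp add: chain_def)
next
  case (Suc l)
  then have l: "l < segments j"
    and walk: "has_walk (edges S - {{j, Suc j}}) (weight S) 0 (chain j l) (height (chain j l))"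
    by simp_all
  have "k < chain j (Suc l)"
    by (simp add: chain_def base_def)
  then have "{chain j l, chain j (Suc l)} \<in> edges S - {{j, Suc j}}"
    using chain_edge_in_edges[OF assms(1) l] doubleton_neq_cut_edge[OF assms(1)] by blast
  from has_walk_step[OF walk this] show ?case
    using weight_chain[OF assms(1) l] height_chain_step(1)[OF assms(1) l] by simp
qed

lemma dist_avoid_leaf_le:
  assumes "(j, t) \<in> S" "j < k" "t < n"
  shows "dist_avoid (edges S) (weight S) 0 (leaf t) {j, Suc j} \<le> enat (2 * k - j + 1)"
proof -
  have "has_walk (edges S - {{j, Suc j}}) (weight S) 0 (hub j) (2 * k - j)"
    using has_walk_chain[OF assms(2), of "segments j" S] height_hub[OF assms(2)]
    by (simp add: hub_def)
  moreover have "{hub j, leaf t} \<in> edges S - {{j, Suc j}}"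
    using leaf_edge_in_edges[OF assms] doubleton_neq_cut_edge[OF assms(2), of "leaf t" "hub j"]
    by (simp add: leaf_def insert_commute)
  ultimately have "has_walk (edges S - {{j, Suc j}}) (weight S) 0 (leaf t) (2 * k - j + 1)"
    using has_walk_step weight_leaf[OF assms] by metis
  then show ?thesis
    by (rule dist_avoid_le_has_walk)
qed

(* A lower bound on the distance from 0 once the spine edge {j, j + 1} is cut: every vertex beyond
  the cut, and leaf t when (j, t) is not in S, is at distance at least 2 k - j + 2. *)
definition cut_potential :: "nat \<Rightarrow> nat \<Rightarrow> nat \<Rightarrow> nat" where
  "cut_potential j t v =
     (if is_leaf v then (if v = leaf t then 2 * k - j + 2 else 2 * k - j + 1)
      else if chain_index v \<le> j then min (2 * k - j + 2) (height v) else 2 * k - j + 2)"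

lemma cut_potential_spine:
  "m \<le> k \<Longrightarrow> j < k \<Longrightarrow> cut_potential j t m = (if m \<le> j then m else 2 * k - j + 2)"
  by (simp add: cut_potential_def is_leaf_def chain_index_def height_def)

lemma cut_potential_chain:
  "m < k \<Longrightarrow> l \<le> segments m \<Longrightarrow> cut_potential j t (chain m l) =
     (if m \<le> j then min (2 * k - j + 2) (height (chain m l)) else 2 * k - j + 2)"
  by (simp add: cut_potential_def not_is_leaf_chain chain_index_chain)

lemma cut_potential_leaf:
  "t' < n \<Longrightarrow> cut_potential j t (leaf t') = (if t' = t then 2 * k - j + 2 else 2 * k - j + 1)"
  by (simp add: cut_potential_def is_leaf_def leaf_def base_def)

lemma feasible_cut_potential:
  assumes "(j, t) \<notin> S" "j < k"
  shows "feasible_potential (edges S - {{j, Suc j}}) (weight S) (cut_potential j t)"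
  unfolding feasible_potential_def
proof
  fix e assume "e \<in> edges S - {{j, Suc j}}"
  then have "e \<in> edges S" and not_cut: "e \<noteq> {j, Suc j}" by auto
  then show "\<forall>a\<in>e. \<forall>b\<in>e. cut_potential j t b \<le> cut_potential j t a + weight S e"
  proof (cases rule: edges_cases)
    case (spine m)
    then have "m \<noteq> j" using not_cut by auto
    then show ?thesis
      unfolding spine(1) weight_spine[OF spine(2)]
      using spine(2) assms(2) by (intro ball_doubleton_le) (auto simp: cut_potential_spine)
  next
    case (chain m l)
    then show ?thesis
      unfolding chain(1) weight_chain[OF chain(2,3)]
      using height_chain_step(1)[OF chain(2,3)]
      by (intro ball_doubleton_le) (auto simp: cut_potential_chain[OF chain(2)])
  next
    case (leaf m t')
    have "t' = t \<Longrightarrow> m \<le> j \<Longrightarrow> m < j"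
      using leaf assms(1) le_neq_implies_less by blast
    moreover have "cut_potential j t (hub m) =
        (if m \<le> j then min (2 * k - j + 2) (2 * k - m) else 2 * k - j + 2)"
      using cut_potential_chain[OF leaf(3) le_refl] height_hub[OF leaf(3)] by (simp add: hub_def)
    ultimately show ?thesis
      unfolding leaf(1) weight_leaf[OF leaf(2-4)]
      using assms(2) by (intro ball_doubleton_le) (auto simp: cut_potential_leaf[OF leaf(4)])
  qed
qed

lemma dist_avoid_leaf_ge:
  assumes "(j, t) \<notin> S" "j < k" "t < n"
  shows "enat (2 * k - j + 2) \<le> dist_avoid (edges S) (weight S) 0 (leaf t) {j, Suc j}"
proof -
  have "cut_potential j t 0 = 0"
    using cut_potential_spine[of 0 j t] assms(2) by simp
  from dist_avoid_ge_feasible_potential[OF feasible_cut_potential[OF assms(1,2)] this, of "leaf t"]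
  show ?thesis
    by (simp add: cut_potential_leaf[OF assms(3)])
qed

lemma dist_avoid_leaf_separates:
  assumes "(j, t) \<in> S" "(j, t) \<notin> S'" "j < k" "t < n"
  shows "dist_avoid (edges S) (weight S) 0 (leaf t) {j, Suc j} \<noteq>
    dist_avoid (edges S') (weight S') 0 (leaf t) {j, Suc j}"
proof
  assume "dist_avoid (edges S) (weight S) 0 (leaf t) {j, Suc j} =
    dist_avoid (edges S') (weight S') 0 (leaf t) {j, Suc j}"
  then have "enat (2 * k - j + 2) \<le> enat (2 * k - j + 1)"
    using dist_avoid_leaf_le[OF assms(1,3,4)] dist_avoid_leaf_ge[OF assms(2-4)]
    by (metis order.trans)
  then show False
    by simp
qed

lemma SSDSO_gadget_encoding_length:
  assumes "is_SSDSO M enc dec"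
  shows "\<exists>S. k * n \<le> length (enc num_vertices (edges S) (weight S) 0)"
proof -
  have "\<exists>S \<in> Pow ({..<k} \<times> {..<n}). k * n \<le> length (enc num_vertices (edges S) (weight S) 0)"
  proof (rule SSDSO_encoding_length[where E = edges and w = weight])
    fix S S' assume S: "S \<in> Pow ({..<k} \<times> {..<n})" "S' \<in> Pow ({..<k} \<times> {..<n})" "S \<noteq> S'"
    then obtain j t where "(j, t) \<in> S \<and> (j, t) \<notin> S' \<or> (j, t) \<in> S' \<and> (j, t) \<notin> S"
      by (auto simp: set_eq_iff)
    moreover have "j < k" "t < n"
      using calculation S(1,2) by auto
    ultimately have "dist_avoid (edges S) (weight S) 0 (leaf t) {j, Suc j} \<noteq>
        dist_avoid (edges S') (weight S') 0 (leaf t) {j, Suc j}"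
      using dist_avoid_leaf_separates by metis
    moreover have "leaf t < num_vertices"
      using \<open>t < n\<close> by (simp add: leaf_def num_vertices_def base_def)
    ultimately show "\<exists>t<num_vertices. \<exists>e\<in>edges S \<inter> edges S'.
        dist_avoid (edges S) (weight S) 0 t e \<noteq> dist_avoid (edges S') (weight S') 0 t e"
      using spine_edge_in_edges[OF \<open>j < k\<close>] by blast
  qed (use assms valid_graph_gadget in
      \<open>simp_all add: num_vertices_def base_def card_Pow card_cartesian_product\<close>)
  then show ?thesis
    by blast
qed

lemma num_vertices_le:
  assumes "k \<le> n" "k * k \<le> n * M"
  shows "num_vertices \<le> 5 * n + 1"
proof -
  have "slot * M \<le> 2 * k + M - 1"
    unfolding slot_def segments_def chain_length_def by (simp add: div_times_less_eq_dividend)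
  then have "k * slot * M \<le> k * (2 * k + M - 1)"
    by (simp add: mult.assoc)
  also have "\<dots> \<le> 2 * (k * k) + k * M"
    by (simp add: algebra_simps right_diff_distrib')
  also have "\<dots> \<le> 3 * n * M"
    using assms mult_le_mono1[OF assms(1), of M] by linarith
  finally have "k * slot \<le> 3 * n"
    using M_pos by simp
  then show ?thesis
    using assms(1) by (simp add: num_vertices_def base_def)
qed

end

lemma exists_gadget_size:
  assumes "1 \<le> n" "1 \<le> M"
  shows "\<exists>k \<le> n. k * k \<le> n * M \<and>
    min (sqrt (real M) * real n powr (3/2)) (real n ^ 2) \<le> 2 * real (k * n)"
proof -
  define s where "s = floor_sqrt (n * M)"
  have "s * s \<le> n * M"
    using floor_sqrt_power2_le[of "n * M"] by (simp add: s_def power2_eq_square)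
  then have "min n s * min n s \<le> n * M"
    by (meson min.cobounded2 mult_le_mono order_trans)
  moreover have "min (sqrt (real M) * real n powr (3/2)) (real n ^ 2) \<le> 2 * real (min n s * n)"
  proof (cases "n \<le> s")
    case True
    then show ?thesis by (simp add: power2_eq_square min_le_iff_disj)
  next
    case False
    have "1 \<le> s"
      using assms by (simp add: s_def le_floor_sqrt_iff)
    have "real (n * M) < real (Suc s) ^ 2"
      using Suc_floor_sqrt_power2_gt[of "n * M"] unfolding s_def of_nat_power[symmetric] of_nat_less_iff .
    then have "sqrt (real n * real M) < real s + 1"
      by (intro real_less_lsqrt) (auto simp: add.commute)
    then have "sqrt (real M) * sqrt (real n) \<le> 2 * real s"
      using \<open>1 \<le> s\<close> by (simp add: real_sqrt_mult mult.commute)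
    have "sqrt (real M) * real n powr (3/2) = sqrt (real M) * sqrt (real n) * real n"
      using powr_add[of "real n" 1 "1/2"] assms(1) by (simp add: powr_half_sqrt)
    also have "\<dots> \<le> 2 * real (s * n)"
      using mult_right_mono[OF \<open>sqrt (real M) * sqrt (real n) \<le> 2 * real s\<close>, of "real n"]
      by simp
    finally show ?thesis
      using False by (simp add: min_le_iff_disj min_absorb2)
  qed
  ultimately show ?thesis
    using min.cobounded1[of n s] by blast
qed

lemma SSDSO_space_lower_bound:
  assumes "1 \<le> n" "1 \<le> M" "is_SSDSO M enc dec"
  shows "\<exists>N E w s. N \<le> 6 * n \<and> valid_graph N E w M \<and> s < N \<and>
    1/2 * min (sqrt (real M) * real n powr (3/2)) (real n ^ 2) \<le> real (length (enc N E w s))"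
proof -
  obtain k where k: "k \<le> n" "k * k \<le> n * M"
    and bound: "min (sqrt (real M) * real n powr (3/2)) (real n ^ 2) \<le> 2 * real (k * n)"
    using exists_gadget_size[OF assms(1,2)] by blast
  interpret dso_gadget M k n
    using assms(2) by unfold_locales
  obtain S where S: "k * n \<le> length (enc num_vertices (edges S) (weight S) 0)"
    using SSDSO_gadget_encoding_length[OF assms(3)] by blast
  have "num_vertices \<le> 6 * n"
    using num_vertices_le[OF k] assms(1) by linarith
  moreover have "0 < num_vertices"
    by (simp add: num_vertices_def base_def)
  moreover have "1/2 * min (sqrt (real M) * real n powr (3/2)) (real n ^ 2)
      \<le> real (length (enc num_vertices (edges S) (weight S) 0))"
    using bound S by (simp flip: of_nat_mult)
  ultimately show ?thesis
    using valid_graph_gadget by blast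
qed

theorem theorem4:
  shows "\<exists>(C::nat) (c::real) (n0::nat). c > 0 \<and>
    (\<forall>n \<ge> n0. \<forall>M \<ge> (1::nat). \<forall>enc dec. is_SSDSO M enc dec \<longrightarrow>
      (\<exists>N E w s. N \<le> C * n \<and> valid_graph N E w M \<and> s < N \<and>
         real (length (enc N E w s)) \<ge> c * min (sqrt (real M) * real n powr (3/2)) (real n ^ 2)))"
  using SSDSO_space_lower_bound by (intro exI[of _ 6] exI[of _ "1/2"] exI[of _ 1]) auto

end
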